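(* Let $E$ and $E^c=\partial\overline{\mathcal{G}}\setminus E$ be nonempty clopen subsets of $\partial\overline{\mathcal{G}}$. Let $f:\overline{\mathcal{G}}\to\mathbb{R}$ be harmonic with $f=C\ge 0$ on $E$ and $f>C$ on $E^c$. Let $\epsilon>0$, and let $t$ be a regular value of $f$ with $C<t<\min_{x\in E^c}f(x)$ and $d(x,E)<\epsilon$ whenever $f(x)\le t$. Then $f^{-1}(t)$ is a finite set of points interior to edges of $\mathcal{G}$. Let $\widetilde{\mathcal{G}}$ be the graph obtained from $\mathcal{G}$ by adding the points of $f^{-1}(t)$ as vertices and subdividing the corresponding edges, and put $\mathcal{G}_t=\widetilde{\mathcal{G}}\cap f^{-1}([t,\infty))$. Then: - $\mathcal{G}_t$ is a subgraph of $\widetilde{\mathcal{G}}$, namely a union of closed edges of $\widetilde{\mathcal{G}}$; - every point of $f^{-1}(t)$ is a boundary vertex of $\mathcal{G}_t$ (of degree one); - $\partial_\nu f(x)>0$ for every $x$ with $f(x)=t$, where $\partial_\nu$ is computed along the edge of $\mathcal{G}_t$ incident on $x$, in the direction pointing from $x$ into that edge.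
   Context: $\mathcal{G}$ is a connected, locally finite metric graph with countable vertex set and countable edge set. Each edge has a positive length and is identified with an interval. $\mathcal{G}$ carries the geodesic distance $d$, and $\overline{\mathcal{G}}$ is its metric completion. A designated set of vertices, containing all vertices of degree $1$, forms the boundary vertices. $\mathcal{G}_{int}$ is $\mathcal{G}$ minus the boundary vertices, and $\partial\overline{\mathcal{G}}=\overline{\mathcal{G}}\setminus\mathcal{G}_{int}$. Standing assumptions: $\overline{\mathcal{G}}$ is compact and $\partial\overline{\mathcal{G}}$ is totally disconnected. Clopen means open and closed in $\partial\overline{\mathcal{G}}$. A function $f:\overline{\mathcal{G}}\to\mathbb{R}$ is harmonic if it is continuous, linear on each edge, and satisfies $\sum_{e\sim v}\partial_\nu f_e(v)=0$ at every interior vertex $v$, where $\partial_\nu f_e(v)$ is the derivative of $f_e$ at $v$ in the direction from $v$ into the edge $e$. A point $x\in\mathcal{G}$ is a critical point of $f$ if $x$ is a vertex or $f'(x)=0$. A number is a critical value if its preimage contains a critical point. Values in the range of $f$ that are not critical values are regular values. *)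

theory Defs
  imports "HOL-Analysis.Analysis"
begin

text \<open>Edge e runs from src e to tgt e and is identified with the interval [0, len e]
  (s = 0 is src e, s = len e is tgt e).  bverts is the designated set of boundary vertices.\<close>
record ('v,'e) mgraph =
  verts  :: "'v set"
  edges  :: "'e set"
  src    :: "'e \<Rightarrow> 'v"
  tgt    :: "'e \<Rightarrow> 'v"
  len    :: "'e \<Rightarrow> real"
  bverts :: "'v set"

datatype ('v,'e) gpoint = Vert 'v | Inner 'e real

definition inner_points :: "('v,'e) mgraph \<Rightarrow> ('v,'e) gpoint set" where
  "inner_points G = {Inner e s | e s. e \<in> edges G \<and> 0 < s \<and> s < len G e}"

definition gpoints :: "('v,'e) mgraph \<Rightarrow> ('v,'e) gpoint set" where
  "gpoints G = Vert ` verts G \<union> inner_points G"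

definition gp :: "('v,'e) mgraph \<Rightarrow> 'e \<Rightarrow> real \<Rightarrow> ('v,'e) gpoint" where
  "gp G e s = (if s = 0 then Vert (src G e) else if s = len G e then Vert (tgt G e) else Inner e s)"

text \<open>Degree (a loop counts twice).\<close>
definition degree :: "('v,'e) mgraph \<Rightarrow> 'v \<Rightarrow> nat" where
  "degree G v = card {e \<in> edges G. src G e = v} + card {e \<in> edges G. tgt G e = v}"

inductive walk :: "('v,'e) mgraph \<Rightarrow> 'v \<Rightarrow> 'v \<Rightarrow> real \<Rightarrow> bool" for G where
  walk_nil: "u \<in> verts G \<Longrightarrow> walk G u u 0"
| walk_fwd: "e \<in> edges G \<Longrightarrow> walk G (tgt G e) w L \<Longrightarrow> walk G (src G e) w (len G e + L)"
| walk_bwd: "e \<in> edges G \<Longrightarrow> walk G (src G e) w L \<Longrightarrow> walk G (tgt G e) w (len G e + L)"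

definition vdist :: "('v,'e) mgraph \<Rightarrow> 'v \<Rightarrow> 'v \<Rightarrow> real" where
  "vdist G u w = Inf {L. walk G u w L}"

text \<open>Exits of a point to the endpoints of its edge, with the distance travelled.\<close>
fun anchors :: "('v,'e) mgraph \<Rightarrow> ('v,'e) gpoint \<Rightarrow> ('v \<times> real) set" where
  "anchors G (Vert v) = {(v, 0)}"
| "anchors G (Inner e s) = {(src G e, s), (tgt G e, len G e - s)}"

fun direct :: "('v,'e) gpoint \<Rightarrow> ('v,'e) gpoint \<Rightarrow> real set" where
  "direct (Inner e s) (Inner e' s') = (if e = e' then {\<bar>s - s'\<bar>} else {})"
| "direct _ _ = {}"

text \<open>Geodesic distance on the metric graph.\<close>
definition gdist :: "('v,'e) mgraph \<Rightarrow> ('v,'e) gpoint \<Rightarrow> ('v,'e) gpoint \<Rightarrow> real" where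
  "gdist G p q = Inf ({a + vdist G u w + b | u a w b. (u, a) \<in> anchors G p \<and> (w, b) \<in> anchors G q}
                      \<union> direct p q)"

definition metric_graph :: "('v,'e) mgraph \<Rightarrow> bool" where
  "metric_graph G \<longleftrightarrow>
     countable (verts G) \<and> countable (edges G) \<and> verts G \<noteq> {} \<and>
     (\<forall>e \<in> edges G. src G e \<in> verts G \<and> tgt G e \<in> verts G \<and> 0 < len G e) \<and>
     (\<forall>v \<in> verts G. finite {e \<in> edges G. src G e = v \<or> tgt G e = v}) \<and>
     (\<forall>u \<in> verts G. \<forall>w \<in> verts G. \<exists>L. walk G u w L) \<and>
     bverts G \<subseteq> verts G \<and> {v \<in> verts G. degree G v = 1} \<subseteq> bverts G"

definition metric_completion ::
  "('v,'e) mgraph \<Rightarrow> 'x set \<Rightarrow> ('x \<Rightarrow> 'x \<Rightarrow> real) \<Rightarrow> (('v,'e) gpoint \<Rightarrow> 'x) \<Rightarrow> bool" where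
  "metric_completion G X dX \<iota> \<longleftrightarrow>
     Metric_space X dX \<and> Metric_space.mcomplete X dX \<and>
     \<iota> ` gpoints G \<subseteq> X \<and>
     (\<forall>p \<in> gpoints G. \<forall>q \<in> gpoints G. dX (\<iota> p) (\<iota> q) = gdist G p q) \<and>
     Metric_space.mtopology X dX closure_of (\<iota> ` gpoints G) = X"

definition bdry :: "('v,'e) mgraph \<Rightarrow> 'x set \<Rightarrow> (('v,'e) gpoint \<Rightarrow> 'x) \<Rightarrow> 'x set" where
  "bdry G X \<iota> = X - \<iota> ` (gpoints G - Vert ` bverts G)"

definition totally_disconnected_in :: "'a topology \<Rightarrow> 'a set \<Rightarrow> bool" where
  "totally_disconnected_in T S \<longleftrightarrow> (\<forall>C. C \<subseteq> S \<and> connectedin T C \<longrightarrow> (\<exists>a. C \<subseteq> {a}))"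

definition efun :: "('v,'e) mgraph \<Rightarrow> (('v,'e) gpoint \<Rightarrow> 'x) \<Rightarrow> ('x \<Rightarrow> real) \<Rightarrow> 'e \<Rightarrow> real \<Rightarrow> real" where
  "efun G \<iota> f e s = f (\<iota> (gp G e s))"

text \<open>Derivative of f_e at the endpoint src e (resp. tgt e), in the direction into the edge.\<close>
definition dnu_src :: "('v,'e) mgraph \<Rightarrow> (('v,'e) gpoint \<Rightarrow> 'x) \<Rightarrow> ('x \<Rightarrow> real) \<Rightarrow> 'e \<Rightarrow> real" where
  "dnu_src G \<iota> f e = (THE D. (efun G \<iota> f e has_real_derivative D) (at 0 within {0..len G e}))"

definition dnu_tgt :: "('v,'e) mgraph \<Rightarrow> (('v,'e) gpoint \<Rightarrow> 'x) \<Rightarrow> ('x \<Rightarrow> real) \<Rightarrow> 'e \<Rightarrow> real" where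
  "dnu_tgt G \<iota> f e = - (THE D. (efun G \<iota> f e has_real_derivative D) (at (len G e) within {0..len G e}))"

definition harmonic ::
  "('v,'e) mgraph \<Rightarrow> 'x set \<Rightarrow> ('x \<Rightarrow> 'x \<Rightarrow> real) \<Rightarrow> (('v,'e) gpoint \<Rightarrow> 'x) \<Rightarrow> ('x \<Rightarrow> real) \<Rightarrow> bool" where
  "harmonic G X dX \<iota> f \<longleftrightarrow>
     continuous_map (Metric_space.mtopology X dX) euclideanreal f \<and>
     (\<forall>e \<in> edges G. \<exists>a b. \<forall>s \<in> {0..len G e}. efun G \<iota> f e s = a + b * s) \<and>
     (\<forall>v \<in> verts G - bverts G.
        (\<Sum>e \<in> {e \<in> edges G. src G e = v}. dnu_src G \<iota> f e)
      + (\<Sum>e \<in> {e \<in> edges G. tgt G e = v}. dnu_tgt G \<iota> f e) = 0)"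

definition critical_point ::
  "('v,'e) mgraph \<Rightarrow> (('v,'e) gpoint \<Rightarrow> 'x) \<Rightarrow> ('x \<Rightarrow> real) \<Rightarrow> ('v,'e) gpoint \<Rightarrow> bool" where
  "critical_point G \<iota> f x \<longleftrightarrow> x \<in> gpoints G \<and>
     ((\<exists>v. x = Vert v) \<or> (\<exists>e s. x = Inner e s \<and> deriv (efun G \<iota> f e) s = 0))"

definition critical_value ::
  "('v,'e) mgraph \<Rightarrow> (('v,'e) gpoint \<Rightarrow> 'x) \<Rightarrow> ('x \<Rightarrow> real) \<Rightarrow> real \<Rightarrow> bool" where
  "critical_value G \<iota> f c \<longleftrightarrow> (\<exists>x. critical_point G \<iota> f x \<and> f (\<iota> x) = c)"

definition regular_value ::
  "('v,'e) mgraph \<Rightarrow> 'x set \<Rightarrow> (('v,'e) gpoint \<Rightarrow> 'x) \<Rightarrow> ('x \<Rightarrow> real) \<Rightarrow> real \<Rightarrow> bool" where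
  "regular_value G X \<iota> f c \<longleftrightarrow> c \<in> f ` X \<and> \<not> critical_value G \<iota> f c"

definition cut_pts :: "('v,'e) mgraph \<Rightarrow> (('v,'e) gpoint \<Rightarrow> 'x) \<Rightarrow> ('x \<Rightarrow> real) \<Rightarrow> real \<Rightarrow> 'e \<Rightarrow> real set" where
  "cut_pts G \<iota> f t e = {s. 0 < s \<and> s < len G e \<and> efun G \<iota> f e s = t}"

definition nodes :: "('v,'e) mgraph \<Rightarrow> (('v,'e) gpoint \<Rightarrow> 'x) \<Rightarrow> ('x \<Rightarrow> real) \<Rightarrow> real \<Rightarrow> 'e \<Rightarrow> real set" where
  "nodes G \<iota> f t e = {0, len G e} \<union> cut_pts G \<iota> f t e"

text \<open>Edges of the subdivided graph Gtilde: (e, a, b) is the piece [a,b] of edge e between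
  consecutive subdivision points.\<close>
definition sub_edges :: "('v,'e) mgraph \<Rightarrow> (('v,'e) gpoint \<Rightarrow> 'x) \<Rightarrow> ('x \<Rightarrow> real) \<Rightarrow> real \<Rightarrow> ('e \<times> real \<times> real) set" where
  "sub_edges G \<iota> f t = {(e, a, b) | e a b. e \<in> edges G \<and> a < b \<and>
      a \<in> nodes G \<iota> f t e \<and> b \<in> nodes G \<iota> f t e \<and> (\<forall>c \<in> nodes G \<iota> f t e. \<not> (a < c \<and> c < b))}"

fun sub_edge_set :: "('v,'e) mgraph \<Rightarrow> ('e \<times> real \<times> real) \<Rightarrow> ('v,'e) gpoint set" where
  "sub_edge_set G (e, a, b) = gp G e ` {a..b}"

fun sub_left :: "('v,'e) mgraph \<Rightarrow> ('e \<times> real \<times> real) \<Rightarrow> ('v,'e) gpoint" where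
  "sub_left G (e, a, b) = gp G e a"

fun sub_right :: "('v,'e) mgraph \<Rightarrow> ('e \<times> real \<times> real) \<Rightarrow> ('v,'e) gpoint" where
  "sub_right G (e, a, b) = gp G e b"

definition Gt_edges :: "('v,'e) mgraph \<Rightarrow> (('v,'e) gpoint \<Rightarrow> 'x) \<Rightarrow> ('x \<Rightarrow> real) \<Rightarrow> real \<Rightarrow> ('e \<times> real \<times> real) set" where
  "Gt_edges G \<iota> f t = {\<sigma> \<in> sub_edges G \<iota> f t. \<forall>x \<in> sub_edge_set G \<sigma>. t \<le> f (\<iota> x)}"

definition Gt_degree :: "('v,'e) mgraph \<Rightarrow> (('v,'e) gpoint \<Rightarrow> 'x) \<Rightarrow> ('x \<Rightarrow> real) \<Rightarrow> real \<Rightarrow> ('v,'e) gpoint \<Rightarrow> nat" where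
  "Gt_degree G \<iota> f t x = card {\<sigma> \<in> Gt_edges G \<iota> f t. sub_left G \<sigma> = x}
                        + card {\<sigma> \<in> Gt_edges G \<iota> f t. sub_right G \<sigma> = x}"

text \<open>Derivative of f at the left (resp. right) endpoint of a piece (e,a,b), in the direction
  pointing from that endpoint into the piece.\<close>
fun dnu_left :: "('v,'e) mgraph \<Rightarrow> (('v,'e) gpoint \<Rightarrow> 'x) \<Rightarrow> ('x \<Rightarrow> real) \<Rightarrow> ('e \<times> real \<times> real) \<Rightarrow> real" where
  "dnu_left G \<iota> f (e, a, b) = (THE D. (efun G \<iota> f e has_real_derivative D) (at a within {a..b}))"

fun dnu_right :: "('v,'e) mgraph \<Rightarrow> (('v,'e) gpoint \<Rightarrow> 'x) \<Rightarrow> ('x \<Rightarrow> real) \<Rightarrow> ('e \<times> real \<times> real) \<Rightarrow> real" where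
  "dnu_right G \<iota> f (e, a, b) = - (THE D. (efun G \<iota> f e has_real_derivative D) (at b within {a..b}))"

end

theory Submission
  imports Defs
begin

(* Vertices are critical points, and on the boundary f is either C < t or at least
   inf f(E^c) > t; so f^-1(t) consists of interior points of edges.  On an edge f is affine
   with end values different from t, hence it meets t at most once, and then with nonzero
   slope.  A geodesic from an interior point must first leave its edge, so level points are
   uniformly isolated, and the level set, closed in a compact space, is finite.  Cutting an
   edge at its level point, each half lies on one side of t, and exactly the half on which f
   increases away from the cut belongs to G_t: this gives degree one and a positive inward
   derivative.  Only continuity and edgewise linearity of f enter. *)

lemma affine_crossing:
  fixes \<alpha> \<beta> r s t :: real
  assumes "\<alpha> + \<beta> * r < t" "t < \<alpha> + \<beta> * s"
  obtains c where "min r s < c" "c < max r s" "\<alpha> + \<beta> * c = t"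
proof -
  have "\<beta> \<noteq> 0" using assms by auto
  define c where "c = (t - \<alpha>) / \<beta>"
  have "\<alpha> + \<beta> * c = t" using \<open>\<beta> \<noteq> 0\<close> by (simp add: c_def)
  moreover have "min r s < c \<and> c < max r s"
  proof (cases "0 < \<beta>")
    case True
    then have "r < c" "c < s" using assms \<open>\<alpha> + \<beta> * c = t\<close> by (auto simp: mult_less_cancel_left)
    then show ?thesis by linarith
  next
    case False
    then have "\<beta> < 0" using \<open>\<beta> \<noteq> 0\<close> by simp
    then have "s < c" "c < r" using assms \<open>\<alpha> + \<beta> * c = t\<close> by (auto simp: mult_less_cancel_left)
    then show ?thesis by linarith
  qed
  ultimately show ?thesis using that by blast
qed

lemma affine_ge_if_no_crossing:
  fixes \<alpha> \<beta> a b p t :: real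
  assumes no_crossing: "\<forall>c. a < c \<and> c < b \<longrightarrow> \<alpha> + \<beta> * c \<noteq> t"
    and "p \<in> {a..b}" "t < \<alpha> + \<beta> * p"
  shows "\<forall>r\<in>{a..b}. t \<le> \<alpha> + \<beta> * r"
proof (rule ccontr)
  assume "\<not> ?thesis"
  then obtain r where "r \<in> {a..b}" "\<alpha> + \<beta> * r < t" by force
  then obtain c where "min r p < c" "c < max r p" "\<alpha> + \<beta> * c = t"
    using affine_crossing assms(3) by blast
  moreover have "a < c" "c < b"
    using calculation \<open>r \<in> {a..b}\<close> \<open>p \<in> {a..b}\<close> by (auto simp: min_less_iff_disj less_max_iff_disj)
  ultimately show False using no_crossing by blast
qed

lemma affine_ge_from_left:
  fixes \<alpha> \<beta> a b t :: real
  assumes "a < b" "\<alpha> + \<beta> * a = t"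
  shows "(\<forall>r\<in>{a..b}. t \<le> \<alpha> + \<beta> * r) \<longleftrightarrow> 0 \<le> \<beta>"
proof
  assume "\<forall>r\<in>{a..b}. t \<le> \<alpha> + \<beta> * r"
  then have "\<beta> * a \<le> \<beta> * b" using assms by force
  then show "0 \<le> \<beta>" using \<open>a < b\<close> by (simp add: mult_le_cancel_left)
qed (use assms in \<open>auto intro: mult_left_mono\<close>)

lemma affine_ge_from_right:
  fixes \<alpha> \<beta> a b t :: real
  assumes "a < b" "\<alpha> + \<beta> * b = t"
  shows "(\<forall>r\<in>{a..b}. t \<le> \<alpha> + \<beta> * r) \<longleftrightarrow> \<beta> \<le> 0"
proof
  assume "\<forall>r\<in>{a..b}. t \<le> \<alpha> + \<beta> * r"
  then have "\<beta> * b \<le> \<beta> * a" using assms by force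
  then show "\<beta> \<le> 0" using \<open>a < b\<close> by (simp add: mult_le_cancel_left)
qed (use assms in \<open>auto intro: mult_left_mono_neg\<close>)

lemma THE_derivative_affine_on:
  fixes g :: "real \<Rightarrow> real"
  assumes "\<forall>s\<in>{a..b}. g s = \<alpha> + \<beta> * s" "a < b"
  shows "(THE D. (g has_real_derivative D) (at a within {a..b})) = \<beta>"
    and "(THE D. (g has_real_derivative D) (at b within {a..b})) = \<beta>"
proof -
  have "((\<lambda>s. \<alpha> + \<beta> * s) has_real_derivative \<beta>) (at x within {a..b})" for x
    by (auto intro!: derivative_eq_intros)
  then have "(g has_real_derivative \<beta>) (at x within {a..b})" if "x \<in> {a..b}" for x
    by (rule has_field_derivative_transform_within[of _ _ _ _ 1]) (use assms that in auto)
  then have "(g has_real_derivative \<beta>) (at a within {a..b})" "(g has_real_derivative \<beta>) (at b within {a..b})"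
    using \<open>a < b\<close> by auto
  moreover have "at a within {a..b} \<noteq> bot" "at b within {a..b} \<noteq> bot"
    using \<open>a < b\<close> by (simp_all add: at_within_Icc_at_right at_within_Icc_at_left)
  ultimately show "(THE D. (g has_real_derivative D) (at a within {a..b})) = \<beta>"
    and "(THE D. (g has_real_derivative D) (at b within {a..b})) = \<beta>"
    using has_field_derivative_unique by blast+
qed

lemma metric_graph_edge:
  assumes "metric_graph G" "e \<in> edges G"
  shows "0 < len G e" "src G e \<in> verts G" "tgt G e \<in> verts G"
  using assms by (auto simp: metric_graph_def)

lemma metric_graph_walk:
  assumes "metric_graph G" "u \<in> verts G" "w \<in> verts G"
  shows "\<exists>L. walk G u w L"
proof -
  have "\<forall>u\<in>verts G. \<forall>w\<in>verts G. \<exists>L. walk G u w L"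
    using assms(1) by (simp add: metric_graph_def)
  then show ?thesis using assms(2,3) by blast
qed

lemma walk_length_nonneg:
  assumes "metric_graph G" "walk G u w L"
  shows "0 \<le> L"
  using assms(2)
proof induction
  case (walk_fwd e w L)
  then show ?case using metric_graph_edge(1)[OF assms(1), of e] by linarith
next
  case (walk_bwd e w L)
  then show ?case using metric_graph_edge(1)[OF assms(1), of e] by linarith
qed simp

lemma vdist_nonneg:
  assumes "metric_graph G" "u \<in> verts G" "w \<in> verts G"
  shows "0 \<le> vdist G u w"
  unfolding vdist_def
proof (rule cInf_greatest)
  show "{L. walk G u w L} \<noteq> {}" using metric_graph_walk[OF assms] by blast
qed (use walk_length_nonneg[OF assms(1)] in blast)

text \<open>A path leaving an interior point of an edge must first run to one of its endpoints.\<close>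
lemma gdist_Inner_other_edge:
  assumes G: "metric_graph G" and "e \<in> edges G" "e' \<in> edges G" "e' \<noteq> e" "0 < s'" "s' < len G e'"
  shows "min s (len G e - s) \<le> gdist G (Inner e s) (Inner e' s')"
proof -
  let ?S = "{a + vdist G u w + b | u a w b.
              (u, a) \<in> anchors G (Inner e s) \<and> (w, b) \<in> anchors G (Inner e' s')}"
  have "min s (len G e - s) \<le> Inf ?S"
  proof (rule cInf_greatest)
    have "s + vdist G (src G e) (src G e') + s' \<in> ?S" by fastforce
    then show "?S \<noteq> {}" by blast
    fix x assume "x \<in> ?S"
    then obtain u a w b where x: "x = a + vdist G u w + b" "(u, a) \<in> anchors G (Inner e s)"
      "(w, b) \<in> anchors G (Inner e' s')" by auto
    then have "u \<in> verts G" "w \<in> verts G" "min s (len G e - s) \<le> a" "0 \<le> b"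
      using metric_graph_edge[OF G \<open>e \<in> edges G\<close>] metric_graph_edge[OF G \<open>e' \<in> edges G\<close>] assms
      by auto
    then show "min s (len G e - s) \<le> x" using x(1) vdist_nonneg[OF G, of u w] by linarith
  qed
  then show ?thesis using \<open>e' \<noteq> e\<close> by (simp add: gdist_def)
qed

lemma walk_start_incident:
  assumes "walk G u w L" "u \<noteq> w"
  shows "\<exists>e\<in>edges G. src G e = u \<or> tgt G e = u"
  using assms by cases auto

lemma metric_graph_no_edges:
  assumes G: "metric_graph G" and "edges G = {}"
  obtains v where "gpoints G = {Vert v}"
proof -
  have "verts G \<noteq> {}" using G by (simp add: metric_graph_def)
  then obtain v where v: "v \<in> verts G" by blast
  have "w = v" if w: "w \<in> verts G" for w
  proof -
    obtain L where "walk G v w L" using metric_graph_walk[OF G v w] by blast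
    then show ?thesis using walk_start_incident \<open>edges G = {}\<close> by fastforce
  qed
  then have "verts G = {v}" using v by blast
  then have "gpoints G = {Vert v}"
    using \<open>edges G = {}\<close> by (simp add: gpoints_def inner_points_def)
  then show ?thesis using that by blast
qed

lemma metric_graph_incident_edge:
  assumes G: "metric_graph G" and "edges G \<noteq> {}" "v \<in> verts G"
  shows "\<exists>e\<in>edges G. src G e = v \<or> tgt G e = v"
proof -
  obtain e where e: "e \<in> edges G" using assms by blast
  show ?thesis
  proof (cases "src G e = v")
    case False
    obtain L where "walk G v (src G e) L"
      using metric_graph_walk[OF G \<open>v \<in> verts G\<close> metric_graph_edge(2)[OF G e]] by blast
    then show ?thesis using walk_start_incident False by fastforce
  qed (use e in blast)
qed

lemma gp_Inner: "0 < s \<Longrightarrow> s < len G e \<Longrightarrow> gp G e s = Inner e s"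
  by (simp add: gp_def)

lemma gp_eq_InnerD: "gp G e' a = Inner e s \<Longrightarrow> e' = e \<and> a = s"
  by (auto simp: gp_def split: if_splits)

lemma gp_in_gpoints:
  assumes "metric_graph G" "e \<in> edges G" "s \<in> {0..len G e}"
  shows "gp G e s \<in> gpoints G"
  using assms metric_graph_edge[OF assms(1,2)] by (auto simp: gp_def gpoints_def inner_points_def)

lemma gpoints_on_edges:
  assumes G: "metric_graph G" and "edges G \<noteq> {}" "x \<in> gpoints G"
  obtains e s where "e \<in> edges G" "s \<in> {0..len G e}" "x = gp G e s"
proof (cases "x \<in> Vert ` verts G")
  case True
  then obtain v where v: "v \<in> verts G" "x = Vert v" by blast
  then obtain e where e: "e \<in> edges G" "src G e = v \<or> tgt G e = v"
    using metric_graph_incident_edge[OF G \<open>edges G \<noteq> {}\<close>] by blast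
  have "0 < len G e" using metric_graph_edge[OF G e(1)] by simp
  then have "x = gp G e 0 \<or> x = gp G e (len G e)" using e(2) v(2) by (auto simp: gp_def)
  moreover have "0 \<in> {0..len G e}" "len G e \<in> {0..len G e}" using \<open>0 < len G e\<close> by auto
  ultimately show ?thesis using that e(1) by blast
next
  case False
  then obtain e s where e: "e \<in> edges G" and s: "0 < s" "s < len G e" "x = Inner e s"
    using \<open>x \<in> gpoints G\<close> by (auto simp: gpoints_def inner_points_def)
  then have "s \<in> {0..len G e}" "x = gp G e s" by (simp_all add: gp_Inner)
  then show ?thesis using that e by blast
qed

lemma metric_completion_no_edges:
  assumes G: "metric_graph G" and completion: "metric_completion G X dX \<iota>" and "edges G = {}"
  obtains x where "X = {x}"
proof -
  obtain v where v: "gpoints G = {Vert v}" using metric_graph_no_edges[OF G \<open>edges G = {}\<close>] .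
  interpret Metric_space X dX using completion by (simp add: metric_completion_def)
  have X: "X = mtopology closure_of {\<iota> (Vert v)}" and "\<iota> (Vert v) \<in> X"
    using completion v by (simp_all add: metric_completion_def)
  have "closedin mtopology {\<iota> (Vert v)}"
    using \<open>\<iota> (Vert v) \<in> X\<close> Hausdorff_imp_t1_space[OF Hausdorff_space_mtopology]
    by (simp add: t1_space_closedin_singleton)
  then have "mtopology closure_of {\<iota> (Vert v)} = {\<iota> (Vert v)}" by (rule closure_of_closedin)
  with X have "X = {\<iota> (Vert v)}" by (rule trans)
  then show ?thesis by (rule that)
qed

lemma (in Metric_space) finite_if_compactin_isolated:
  assumes "compactin mtopology S"
    and isolated: "\<And>x. x \<in> S \<Longrightarrow> \<exists>r>0. \<forall>y\<in>S. y \<noteq> x \<longrightarrow> r \<le> d x y"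
  shows "finite S"
proof -
  have "x \<notin> mtopology derived_set_of S" if "x \<in> S" for x
  proof
    assume "x \<in> mtopology derived_set_of S"
    then have limit: "\<forall>r>0. \<exists>y\<in>S. y \<noteq> x \<and> d x y < r"
      by (simp add: metric_derived_set_of) blast
    obtain r where "r > 0" "\<forall>y\<in>S. y \<noteq> x \<longrightarrow> r \<le> d x y" using isolated[OF \<open>x \<in> S\<close>] by blast
    then show False using limit by force
  qed
  then have "S \<inter> mtopology derived_set_of S = {}" by blast
  then show ?thesis using assms(1) discrete_compactin_eq_finite by blast
qed

lemma regular_value_off_vertices:
  assumes "regular_value G X \<iota> f t" "v \<in> verts G"
  shows "f (\<iota> (Vert v)) \<noteq> t"
proof -
  have "critical_point G \<iota> f (Vert v)" using assms(2) by (simp add: critical_point_def gpoints_def)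
  then show ?thesis using assms(1) by (auto simp: regular_value_def critical_value_def)
qed

lemma sub_edges_iff:
  "(e, a, b) \<in> sub_edges G \<iota> f t \<longleftrightarrow> e \<in> edges G \<and> a < b \<and> a \<in> nodes G \<iota> f t e
     \<and> b \<in> nodes G \<iota> f t e \<and> (\<forall>c\<in>nodes G \<iota> f t e. \<not> (a < c \<and> c < b))"
  by (simp add: sub_edges_def)

lemma sub_edges_no_cut:
  assumes "e \<in> edges G" "0 < len G e" "cut_pts G \<iota> f t e = {}"
  shows "(e, a, b) \<in> sub_edges G \<iota> f t \<longleftrightarrow> a = 0 \<and> b = len G e"
  using assms unfolding sub_edges_iff nodes_def by auto

lemma sub_edges_one_cut:
  assumes "e \<in> edges G" "0 < c" "c < len G e" "cut_pts G \<iota> f t e = {c}"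
  shows "(e, a, b) \<in> sub_edges G \<iota> f t \<longleftrightarrow> (a = 0 \<and> b = c) \<or> (a = c \<and> b = len G e)"
proof -
  have "nodes G \<iota> f t e = {0, c, len G e}" using assms(4) by (auto simp: nodes_def)
  then show ?thesis using assms(1-3) unfolding sub_edges_iff by auto
qed

lemma sub_edges_at_cut:
  assumes "e \<in> edges G" "0 < c" "c < len G e" "cut_pts G \<iota> f t e = {c}"
  shows "{\<sigma> \<in> sub_edges G \<iota> f t. sub_left G \<sigma> = Inner e c} = {(e, c, len G e)}"
    and "{\<sigma> \<in> sub_edges G \<iota> f t. sub_right G \<sigma> = Inner e c} = {(e, 0, c)}"
proof -
  have left: "\<sigma> \<in> sub_edges G \<iota> f t \<and> sub_left G \<sigma> = Inner e c \<longleftrightarrow> \<sigma> = (e, c, len G e)"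
    and right: "\<sigma> \<in> sub_edges G \<iota> f t \<and> sub_right G \<sigma> = Inner e c \<longleftrightarrow> \<sigma> = (e, 0, c)" for \<sigma>
  proof -
    obtain e' a b where \<sigma>: "\<sigma> = (e', a, b)" by (cases \<sigma>)
    show "\<sigma> \<in> sub_edges G \<iota> f t \<and> sub_left G \<sigma> = Inner e c \<longleftrightarrow> \<sigma> = (e, c, len G e)"
      "\<sigma> \<in> sub_edges G \<iota> f t \<and> sub_right G \<sigma> = Inner e c \<longleftrightarrow> \<sigma> = (e, 0, c)"
      using sub_edges_one_cut[OF assms] gp_Inner[OF assms(2,3)] assms(2,3)
        gp_eq_InnerD[of G e' a e c] gp_eq_InnerD[of G e' b e c]
      unfolding \<sigma> by auto
  qed
  show "{\<sigma> \<in> sub_edges G \<iota> f t. sub_left G \<sigma> = Inner e c} = {(e, c, len G e)}"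
    using left by blast
  show "{\<sigma> \<in> sub_edges G \<iota> f t. sub_right G \<sigma> = Inner e c} = {(e, 0, c)}"
    using right by blast
qed

lemma Gt_edges_subset: "Gt_edges G \<iota> f t \<subseteq> sub_edges G \<iota> f t"
  by (auto simp: Gt_edges_def)

lemma Gt_edges_iff:
  "(e, a, b) \<in> Gt_edges G \<iota> f t \<longleftrightarrow>
     (e, a, b) \<in> sub_edges G \<iota> f t \<and> (\<forall>r\<in>{a..b}. t \<le> efun G \<iota> f e r)"
  by (auto simp: Gt_edges_def efun_def)

lemma Gt_degree_nonzero_imp_covered:
  assumes "Gt_degree G \<iota> f t x \<noteq> 0"
  shows "\<exists>\<sigma>\<in>Gt_edges G \<iota> f t. x \<in> sub_edge_set G \<sigma>"
proof -
  have "{\<sigma> \<in> Gt_edges G \<iota> f t. sub_left G \<sigma> = x \<or> sub_right G \<sigma> = x} \<noteq> {}"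
  proof
    assume "{\<sigma> \<in> Gt_edges G \<iota> f t. sub_left G \<sigma> = x \<or> sub_right G \<sigma> = x} = {}"
    then have "{\<sigma> \<in> Gt_edges G \<iota> f t. sub_left G \<sigma> = x} = {}"
      and "{\<sigma> \<in> Gt_edges G \<iota> f t. sub_right G \<sigma> = x} = {}" by blast+
    then show False using assms unfolding Gt_degree_def by (simp only: card.empty)
  qed
  then obtain \<sigma> where \<sigma>: "\<sigma> \<in> Gt_edges G \<iota> f t" "sub_left G \<sigma> = x \<or> sub_right G \<sigma> = x"
    by blast
  obtain e a b where \<sigma>_eq: "\<sigma> = (e, a, b)" by (cases \<sigma>)
  then have "a \<le> b" using \<sigma>(1) by (simp add: Gt_edges_def sub_edges_iff)
  then have "sub_left G \<sigma> \<in> sub_edge_set G \<sigma>" "sub_right G \<sigma> \<in> sub_edge_set G \<sigma>"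
    by (auto simp: \<sigma>_eq)
  then show ?thesis using \<sigma> by blast
qed

locale edgewise_affine_level =
  fixes G :: "('v,'e) mgraph" and \<iota> :: "('v,'e) gpoint \<Rightarrow> 'x" and f :: "'x \<Rightarrow> real" and t :: real
  assumes graph: "metric_graph G"
    and affine_on_edges: "\<forall>e\<in>edges G. \<exists>\<alpha> \<beta>. \<forall>s\<in>{0..len G e}. efun G \<iota> f e s = \<alpha> + \<beta> * s"
    and off_level_at_vertices: "\<forall>v\<in>verts G. f (\<iota> (Vert v)) \<noteq> t"
begin

abbreviation "ef \<equiv> efun G \<iota> f"
abbreviation "cp \<equiv> cut_pts G \<iota> f t"
abbreviation "SE \<equiv> sub_edges G \<iota> f t"
abbreviation "GE \<equiv> Gt_edges G \<iota> f t"

lemma edge_affine: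
  assumes "e \<in> edges G"
  obtains \<alpha> \<beta> where "\<forall>s\<in>{0..len G e}. ef e s = \<alpha> + \<beta> * s"
  using affine_on_edges assms by blast

lemma slope_nonzero_if_level:
  assumes "e \<in> edges G" "\<forall>s\<in>{0..len G e}. ef e s = \<alpha> + \<beta> * s"
    and "r \<in> {0..len G e}" "\<alpha> + \<beta> * r = t"
  shows "\<beta> \<noteq> 0"
proof
  assume "\<beta> = 0"
  then have "f (\<iota> (Vert (src G e))) = t"
    using assms metric_graph_edge(1)[OF graph assms(1)] by (auto simp: efun_def gp_def)
  then show False using off_level_at_vertices metric_graph_edge(2)[OF graph assms(1)] by blast
qed

lemma cut_pts_cases:
  assumes e: "e \<in> edges G"
  obtains \<alpha> \<beta> where "\<forall>s\<in>{0..len G e}. ef e s = \<alpha> + \<beta> * s" "cp e = {}"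
  | \<alpha> \<beta> c where "\<forall>s\<in>{0..len G e}. ef e s = \<alpha> + \<beta> * s" "cp e = {c}" "0 < c" "c < len G e"
      "\<beta> \<noteq> 0" "\<alpha> + \<beta> * c = t"
proof -
  obtain \<alpha> \<beta> where aff: "\<forall>s\<in>{0..len G e}. ef e s = \<alpha> + \<beta> * s" using edge_affine[OF e] .
  show ?thesis
  proof (cases "cp e = {}")
    case False
    then obtain c where "c \<in> cp e" by blast
    then have c: "0 < c" "c < len G e" "\<alpha> + \<beta> * c = t" using aff by (auto simp: cut_pts_def)
    then have "\<beta> \<noteq> 0" using slope_nonzero_if_level[OF e aff, of c] by simp
    then have "cp e = {c}" using aff c by (auto simp: cut_pts_def)
    then show ?thesis using that(2)[OF aff _ c(1,2) \<open>\<beta> \<noteq> 0\<close> c(3)] by blast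
  qed (use aff that(1) in blast)
qed

lemma cut_pts_unique:
  assumes "e \<in> edges G" "s \<in> cp e" "s' \<in> cp e"
  shows "s' = s"
  using cut_pts_cases[OF assms(1)] assms(2,3) by (metis empty_iff singletonD)

lemma sub_edges_bounds:
  assumes "(e, a, b) \<in> SE"
  shows "e \<in> edges G" "0 \<le> a" "a < b" "b \<le> len G e"
  using assms metric_graph_edge(1)[OF graph, of e]
  unfolding sub_edges_iff nodes_def cut_pts_def by auto

lemma Gt_edges_iff_affine:
  assumes "(e, a, b) \<in> SE" "\<forall>s\<in>{0..len G e}. ef e s = \<alpha> + \<beta> * s"
  shows "(e, a, b) \<in> GE \<longleftrightarrow> (\<forall>r\<in>{a..b}. t \<le> \<alpha> + \<beta> * r)"
  using assms sub_edges_bounds[OF assms(1)] by (auto simp: Gt_edges_iff)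

lemma sub_edge_containing:
  assumes e: "e \<in> edges G" and s: "s \<in> {0..len G e}"
  obtains a b where "(e, a, b) \<in> SE" "s \<in> {a..b}"
  using cut_pts_cases[OF e]
proof cases
  case 1
  have "(e, 0, len G e) \<in> SE" using sub_edges_no_cut[OF e metric_graph_edge(1)[OF graph e] 1(2)] by simp
  then show ?thesis using that s by blast
next
  case (2 \<alpha> \<beta> c)
  have "(e, 0, c) \<in> SE" "(e, c, len G e) \<in> SE" using sub_edges_one_cut[OF e 2(3,4,2)] by simp_all
  moreover have "s \<in> {0..c} \<or> s \<in> {c..len G e}" using s by auto
  ultimately show ?thesis using that by blast
qed

lemma sub_edge_in_Gt_edges:
  assumes \<sigma>: "(e, a, b) \<in> SE" and p: "p \<in> {a..b}" "t < ef e p"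
  shows "(e, a, b) \<in> GE"
proof -
  note bounds = sub_edges_bounds[OF \<sigma>]
  obtain \<alpha> \<beta> where aff: "\<forall>s\<in>{0..len G e}. ef e s = \<alpha> + \<beta> * s" using edge_affine[OF bounds(1)] .
  have "\<alpha> + \<beta> * c \<noteq> t" if "a < c" "c < b" for c
  proof
    assume "\<alpha> + \<beta> * c = t"
    then have "c \<in> nodes G \<iota> f t e" using that bounds aff by (simp add: nodes_def cut_pts_def)
    then show False using \<sigma> that by (simp add: sub_edges_iff)
  qed
  then have "\<forall>r\<in>{a..b}. t \<le> \<alpha> + \<beta> * r"
    using affine_ge_if_no_crossing[of a b] p aff bounds by auto
  then show ?thesis using Gt_edges_iff_affine[OF \<sigma> aff] by simp
qed

lemma superlevel_edge_point_covered:
  assumes "e \<in> edges G" "s \<in> {0..len G e}" "t < ef e s"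
  shows "\<exists>\<sigma>\<in>GE. gp G e s \<in> sub_edge_set G \<sigma>"
proof -
  obtain a b where "(e, a, b) \<in> SE" "s \<in> {a..b}" using sub_edge_containing assms(1,2) .
  then have "(e, a, b) \<in> GE" using sub_edge_in_Gt_edges assms(3) by blast
  moreover have "gp G e s \<in> sub_edge_set G (e, a, b)" using \<open>s \<in> {a..b}\<close> by simp
  ultimately show ?thesis by blast
qed

lemma Gt_degree_cut_point:
  assumes e: "e \<in> edges G" and s: "s \<in> cp e"
  shows "Gt_degree G \<iota> f t (Inner e s) = 1"
  using cut_pts_cases[OF e]
proof cases
  case (2 \<alpha> \<beta> c)
  then have "c = s" "0 < s" "s < len G e" using s by auto
  have pieces: "{\<sigma> \<in> SE. sub_left G \<sigma> = Inner e s} = {(e, s, len G e)}"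
    "{\<sigma> \<in> SE. sub_right G \<sigma> = Inner e s} = {(e, 0, s)}"
    using sub_edges_at_cut[OF e 2(3,4,2)] \<open>c = s\<close> by simp_all
  then have "(e, s, len G e) \<in> SE" "(e, 0, s) \<in> SE" by blast+
  have level: "\<alpha> + \<beta> * s = t" using 2(6) \<open>c = s\<close> by simp
  have "(e, s, len G e) \<in> GE \<longleftrightarrow> 0 \<le> \<beta>"
    unfolding Gt_edges_iff_affine[OF \<open>(e, s, len G e) \<in> SE\<close> 2(1)]
    by (rule affine_ge_from_left[OF \<open>s < len G e\<close> level])
  moreover have "(e, 0, s) \<in> GE \<longleftrightarrow> \<beta> \<le> 0"
    unfolding Gt_edges_iff_affine[OF \<open>(e, 0, s) \<in> SE\<close> 2(1)]
    by (rule affine_ge_from_right[OF \<open>0 < s\<close> level])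
  moreover have "{\<sigma> \<in> GE. P \<sigma>} = {\<sigma> \<in> SE. P \<sigma>} \<inter> GE" for P
    using Gt_edges_subset by blast
  ultimately show ?thesis using pieces \<open>\<beta> \<noteq> 0\<close> unfolding Gt_degree_def by auto
qed (use s in simp)

lemma dnu_left_pos:
  assumes "\<sigma> \<in> GE" "f (\<iota> (sub_left G \<sigma>)) = t"
  shows "0 < dnu_left G \<iota> f \<sigma>"
proof -
  obtain e a b where \<sigma>: "\<sigma> = (e, a, b)" by (cases \<sigma>)
  then have SE: "(e, a, b) \<in> SE" using assms(1) Gt_edges_subset by blast
  note bounds = sub_edges_bounds[OF SE]
  obtain \<alpha> \<beta> where aff: "\<forall>s\<in>{0..len G e}. ef e s = \<alpha> + \<beta> * s" using edge_affine[OF bounds(1)] .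
  then have aff_ab: "\<forall>s\<in>{a..b}. ef e s = \<alpha> + \<beta> * s" using bounds by auto
  have level: "\<alpha> + \<beta> * a = t" using assms(2) aff_ab bounds(3) \<sigma> by (simp add: efun_def)
  have "\<beta> \<noteq> 0" using slope_nonzero_if_level[OF bounds(1) aff _ level] bounds by simp
  moreover have "0 \<le> \<beta>"
    using assms(1) \<sigma> Gt_edges_iff_affine[OF SE aff] affine_ge_from_left[OF bounds(3) level] by simp
  moreover have "dnu_left G \<iota> f \<sigma> = \<beta>"
    using THE_derivative_affine_on(1)[OF aff_ab bounds(3)] \<sigma> by simp
  ultimately show ?thesis by simp
qed

lemma dnu_right_pos:
  assumes "\<sigma> \<in> GE" "f (\<iota> (sub_right G \<sigma>)) = t"
  shows "0 < dnu_right G \<iota> f \<sigma>"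
proof -
  obtain e a b where \<sigma>: "\<sigma> = (e, a, b)" by (cases \<sigma>)
  then have SE: "(e, a, b) \<in> SE" using assms(1) Gt_edges_subset by blast
  note bounds = sub_edges_bounds[OF SE]
  obtain \<alpha> \<beta> where aff: "\<forall>s\<in>{0..len G e}. ef e s = \<alpha> + \<beta> * s" using edge_affine[OF bounds(1)] .
  then have aff_ab: "\<forall>s\<in>{a..b}. ef e s = \<alpha> + \<beta> * s" using bounds by auto
  have level: "\<alpha> + \<beta> * b = t" using assms(2) aff_ab bounds(3) \<sigma> by (simp add: efun_def)
  have "\<beta> \<noteq> 0" using slope_nonzero_if_level[OF bounds(1) aff _ level] bounds by simp
  moreover have "\<beta> \<le> 0"
    using assms(1) \<sigma> Gt_edges_iff_affine[OF SE aff] affine_ge_from_right[OF bounds(3) level] by simp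
  moreover have "dnu_right G \<iota> f \<sigma> = - \<beta>"
    using THE_derivative_affine_on(2)[OF aff_ab bounds(3)] \<sigma> by simp
  ultimately show ?thesis by simp
qed

lemma level_gpointE:
  assumes "x \<in> gpoints G" "f (\<iota> x) = t"
  obtains e s where "e \<in> edges G" "s \<in> cp e" "x = Inner e s"
proof -
  have "x \<notin> Vert ` verts G" using assms(2) off_level_at_vertices by auto
  then obtain e s where "e \<in> edges G" "0 < s" "s < len G e" "x = Inner e s"
    using assms(1) by (auto simp: gpoints_def inner_points_def)
  moreover from this have "s \<in> cp e" using assms(2) by (simp add: cut_pts_def efun_def gp_Inner)
  ultimately show ?thesis using that by blast
qed

lemma level_gpoints_subset_inner_points: "{x \<in> gpoints G. f (\<iota> x) = t} \<subseteq> inner_points G"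
  by (auto elim!: level_gpointE simp: inner_points_def cut_pts_def)

lemma Gt_degree_level_point:
  assumes "x \<in> gpoints G" "f (\<iota> x) = t"
  shows "Gt_degree G \<iota> f t x = 1"
  using level_gpointE[OF assms] Gt_degree_cut_point by metis

lemma superlevel_eq_Union_Gt_edges:
  assumes "edges G \<noteq> {}"
  shows "{x \<in> gpoints G. t \<le> f (\<iota> x)} = \<Union> (sub_edge_set G ` GE)"
proof (intro equalityI subsetI)
  fix x assume "x \<in> {x \<in> gpoints G. t \<le> f (\<iota> x)}"
  then have x: "x \<in> gpoints G" "t \<le> f (\<iota> x)" by auto
  show "x \<in> \<Union> (sub_edge_set G ` GE)"
  proof (cases "f (\<iota> x) = t")
    case True
    then have "Gt_degree G \<iota> f t x \<noteq> 0" using Gt_degree_level_point x(1) by simp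
    then show ?thesis using Gt_degree_nonzero_imp_covered by blast
  next
    case False
    obtain e s where "e \<in> edges G" "s \<in> {0..len G e}" "x = gp G e s"
      using gpoints_on_edges[OF graph assms x(1)] .
    moreover from this have "t < ef e s" using x(2) False by (simp add: efun_def)
    ultimately show ?thesis using superlevel_edge_point_covered by blast
  qed
next
  fix x assume "x \<in> \<Union> (sub_edge_set G ` GE)"
  then obtain \<sigma> where "\<sigma> \<in> GE" "x \<in> sub_edge_set G \<sigma>" by blast
  moreover obtain e a b where \<sigma>: "\<sigma> = (e, a, b)" by (cases \<sigma>)
  ultimately obtain r where GE: "(e, a, b) \<in> GE" and r: "r \<in> {a..b}" "x = gp G e r" by auto
  then have "(e, a, b) \<in> SE" using Gt_edges_subset by blast
  note bounds = sub_edges_bounds[OF this]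
  have "x \<in> gpoints G" using gp_in_gpoints[OF graph bounds(1)] r bounds by simp
  moreover have "t \<le> f (\<iota> x)" using GE r by (simp add: Gt_edges_iff efun_def)
  ultimately show "x \<in> {x \<in> gpoints G. t \<le> f (\<iota> x)}" by simp
qed

lemma cut_points_separated:
  assumes e: "e \<in> edges G" "s \<in> cp e" and e': "e' \<in> edges G" "s' \<in> cp e'"
    and "Inner e' s' \<noteq> Inner e s"
  shows "min s (len G e - s) \<le> gdist G (Inner e s) (Inner e' s')"
proof -
  have "e' \<noteq> e" using cut_pts_unique e e' assms(5) by blast
  then show ?thesis using gdist_Inner_other_edge[OF graph e(1) e'(1)] e'(2) by (simp add: cut_pts_def)
qed

lemma finite_level_set:
  assumes "Metric_space X dX" and compact: "compact_space (Metric_space.mtopology X dX)"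
    and cont: "continuous_map (Metric_space.mtopology X dX) euclideanreal f"
    and isometry: "\<forall>p\<in>gpoints G. \<forall>q\<in>gpoints G. dX (\<iota> p) (\<iota> q) = gdist G p q"
    and level_in_graph: "{x \<in> X. f x = t} \<subseteq> \<iota> ` gpoints G"
  shows "finite {x \<in> X. f x = t}"
proof -
  interpret Metric_space X dX by fact
  have "closedin mtopology {x \<in> X. f x = t}"
    using closedin_continuous_map_preimage[OF cont, of "{t}"] by simp
  then have "compactin mtopology {x \<in> X. f x = t}" using closedin_compact_space[OF compact] by simp
  moreover have "\<exists>r>0. \<forall>y\<in>{x \<in> X. f x = t}. y \<noteq> x \<longrightarrow> r \<le> dX x y" if x: "x \<in> {x \<in> X. f x = t}" for x
  proof -
    obtain p where p: "p \<in> gpoints G" "x = \<iota> p" "f (\<iota> p) = t" using x level_in_graph by auto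
    then obtain e s where e: "e \<in> edges G" "s \<in> cp e" "p = Inner e s" using level_gpointE by blast
    have "min s (len G e - s) \<le> dX x y" if y: "y \<in> {x \<in> X. f x = t}" "y \<noteq> x" for y
    proof -
      obtain q where q: "q \<in> gpoints G" "y = \<iota> q" "f (\<iota> q) = t" using y level_in_graph by auto
      then obtain e' s' where e': "e' \<in> edges G" "s' \<in> cp e'" "q = Inner e' s'" using level_gpointE by blast
      then show ?thesis using cut_points_separated[OF e(1,2) e'(1,2)] isometry p q e y(2) by auto
    qed
    moreover have "0 < min s (len G e - s)" using e(2) by (simp add: cut_pts_def)
    ultimately show ?thesis by blast
  qed
  ultimately show ?thesis by (rule finite_if_compactin_isolated)
qed

end

theorem lemma3p10:
  fixes G :: "('v,'e) mgraph"
    and X :: "'x set" and dX :: "'x \<Rightarrow> 'x \<Rightarrow> real" and \<iota> :: "('v,'e) gpoint \<Rightarrow> 'x"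
    and f :: "'x \<Rightarrow> real" and E :: "'x set" and C \<epsilon> t :: real
  assumes graph: "metric_graph G"
    and completion: "metric_completion G X dX \<iota>"
    and compact: "compact_space (Metric_space.mtopology X dX)"
    and totdisc: "totally_disconnected_in (Metric_space.mtopology X dX) (bdry G X \<iota>)"
    and E_sub: "E \<subseteq> bdry G X \<iota>"
    and E_ne: "E \<noteq> {}" and Ec_ne: "bdry G X \<iota> - E \<noteq> {}"
    and E_open: "openin (subtopology (Metric_space.mtopology X dX) (bdry G X \<iota>)) E"
    and E_closed: "closedin (subtopology (Metric_space.mtopology X dX) (bdry G X \<iota>)) E"
    and harm: "harmonic G X dX \<iota> f"
    and C_nonneg: "0 \<le> C"
    and f_E: "\<forall>x \<in> E. f x = C"
    and f_Ec: "\<forall>x \<in> bdry G X \<iota> - E. C < f x"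
    and eps: "0 < \<epsilon>"
    and reg: "regular_value G X \<iota> f t"
    and t_gt: "C < t"
    and t_lt: "t < Inf (f ` (bdry G X \<iota> - E))"
    and near: "\<forall>x \<in> X. f x \<le> t \<longrightarrow> Inf ((\<lambda>y. dX x y) ` E) < \<epsilon>"
  shows "finite {x \<in> X. f x = t} \<and> {x \<in> X. f x = t} \<subseteq> \<iota> ` inner_points G
     \<and> {x \<in> gpoints G. t \<le> f (\<iota> x)} = \<Union> (sub_edge_set G ` Gt_edges G \<iota> f t)
     \<and> (\<forall>x \<in> gpoints G. f (\<iota> x) = t \<longrightarrow> Gt_degree G \<iota> f t x = 1)
     \<and> (\<forall>x \<in> gpoints G. \<forall>\<sigma> \<in> Gt_edges G \<iota> f t. f (\<iota> x) = t \<longrightarrow>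
           (sub_left G \<sigma> = x \<longrightarrow> 0 < dnu_left G \<iota> f \<sigma>)
         \<and> (sub_right G \<sigma> = x \<longrightarrow> 0 < dnu_right G \<iota> f \<sigma>))"
proof -
  have affine: "\<forall>e\<in>edges G. \<exists>\<alpha> \<beta>. \<forall>s\<in>{0..len G e}. efun G \<iota> f e s = \<alpha> + \<beta> * s"
    and cont: "continuous_map (Metric_space.mtopology X dX) euclideanreal f"
    using harm by (simp_all add: harmonic_def)
  interpret edgewise_affine_level G \<iota> f t
    using graph affine regular_value_off_vertices[OF reg] by unfold_locales blast+
  have MS: "Metric_space X dX"
    and isometry: "\<forall>p\<in>gpoints G. \<forall>q\<in>gpoints G. dX (\<iota> p) (\<iota> q) = gdist G p q"
    using completion by (simp_all add: metric_completion_def)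
  have "bdd_below (f ` (bdry G X \<iota> - E))"
    using f_Ec by (intro bdd_belowI2[of _ C]) (simp add: less_imp_le)
  then have "f x \<noteq> t" if "x \<in> bdry G X \<iota>" for x
    using that f_E t_gt t_lt cInf_lower[of "f x" "f ` (bdry G X \<iota> - E)"] by (cases "x \<in> E") auto
  then have level_in_graph: "{x \<in> X. f x = t} \<subseteq> \<iota> ` {p \<in> gpoints G. f (\<iota> p) = t}"
    by (auto simp: bdry_def)
  have "edges G \<noteq> {}"
  proof
    assume "edges G = {}"
    then obtain x where "X = {x}" using metric_completion_no_edges[OF graph completion] by blast
    then show False using E_sub E_ne Ec_ne by (auto simp: bdry_def)
  qed
  show ?thesis
    using finite_level_set[OF MS compact cont isometry] level_in_graph
      level_gpoints_subset_inner_points superlevel_eq_Union_Gt_edges[OF \<open>edges G \<noteq> {}\<close>]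
      Gt_degree_level_point
      dnu_left_pos dnu_right_pos by blast
qed

end
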